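(* Let $\varphi$ be an automorphism of $F_n$ with basis $A$. Then $\varphi$ is almost length-increasing if and only if $|a\varphi|=1$ for every $a\in A$.
   Context: Elements of $F_n$ are identified with reduced words over $A\cup A^{-1}$ and $|u|$ denotes length; maps are written on the right. An endomorphism $\varphi$ of $F_n$ is almost length-increasing if $|u\varphi|<|u|$ for only finitely many $u\in F_n$. *)

theory Defs
  imports "HOL-Algebra.Group"
begin

text \<open>Letters of A \<union> A^-1 with A = {0..<n}: (a, False) is the generator a,
  (a, True) is its inverse. Elements of F_n are reduced words.\<close>

type_synonym letter = "nat \<times> bool"
type_synonym word = "letter list"

definition inv_letter :: "letter \<Rightarrow> letter" where
  "inv_letter x = (fst x, \<not> snd x)"

fun reduced :: "word \<Rightarrow> bool" where
  "reduced [] = True"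
| "reduced [x] = True"
| "reduced (x # y # ys) = (y \<noteq> inv_letter x \<and> reduced (y # ys))"

fun red :: "word \<Rightarrow> word" where
  "red [] = []"
| "red (x # xs) = (case red xs of
       [] \<Rightarrow> [x]
     | y # ys \<Rightarrow> (if y = inv_letter x then ys else x # y # ys))"

definition Fn_words :: "nat \<Rightarrow> word set" where
  "Fn_words n = {w. reduced w \<and> (\<forall>x\<in>set w. fst x < n)}"

definition free_group :: "nat \<Rightarrow> word monoid" where
  "free_group n = \<lparr>carrier = Fn_words n, mult = (\<lambda>u v. red (u @ v)), one = []\<rparr>"

definition almost_length_increasing :: "nat \<Rightarrow> (word \<Rightarrow> word) \<Rightarrow> bool" where
  "almost_length_increasing n \<phi> \<longleftrightarrow>
     finite {u \<in> Fn_words n. length (\<phi> u) < length u}"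

end

theory Submission
  imports Defs
begin

text \<open>If \<phi> is almost length-increasing, only words of bounded length shrink, so for large L
  the bijection \<phi> maps the finite ball of radius L onto itself. Let x be the first letter of
  a\<phi>. Then x^L = u\<phi> with |u| \<le> L, and the word red (u a), of length at most L + 1, is mapped
  to the reduced word x^L (a\<phi>) of length L + |a\<phi>|; hence |a\<phi>| \<le> 1. Conversely, if every
  generator is mapped to a letter, so is its inverse, hence \<phi> never increases length; an
  injective self-map with finite balls that never increases length permutes every ball, so \<phi>
  preserves length.\<close>

lemma finite_inj_on_image_eq_if_subset_image:
  assumes "finite A" "A \<subseteq> f ` A" "inj_on f A"
  shows "f ` A = A"
  using assms card_image card_subset_eq finite_imageI by metis

lemma bij_betw_image_sublevel_eq:
  fixes s :: "'a \<Rightarrow> nat"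
  assumes bij: "bij_betw f C C" and fin: "finite {x \<in> C. s x \<le> L}"
    and shrinking_small: "\<And>x. x \<in> C \<Longrightarrow> s (f x) < s x \<Longrightarrow> s x \<le> L"
  shows "f ` {x \<in> C. s x \<le> L} = {x \<in> C. s x \<le> L}"
proof (rule finite_inj_on_image_eq_if_subset_image[OF fin])
  show "{x \<in> C. s x \<le> L} \<subseteq> f ` {x \<in> C. s x \<le> L}"
  proof
    fix y assume y: "y \<in> {x \<in> C. s x \<le> L}"
    then have "y \<in> f ` C" using bij by (simp add: bij_betw_def)
    then obtain x where x: "x \<in> C" "f x = y" by blast
    have "s x \<le> L"
      using shrinking_small[OF x(1)] x y by fastforce
    with x show "y \<in> f ` {x \<in> C. s x \<le> L}" by blast
  qed
  show "inj_on f {x \<in> C. s x \<le> L}"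
    using bij by (auto simp: bij_betw_def intro: inj_on_subset)
qed

lemma inj_on_nonincreasing_imp_size_eq:
  fixes s :: "'a \<Rightarrow> nat"
  assumes inj: "inj_on f C" and closed: "f ` C \<subseteq> C"
    and fin: "\<And>L. finite {x \<in> C. s x \<le> L}"
    and nonincreasing: "\<And>x. x \<in> C \<Longrightarrow> s (f x) \<le> s x"
    and x: "x \<in> C"
  shows "s (f x) = s x"
proof (rule ccontr)
  assume "s (f x) \<noteq> s x"
  then have less: "s (f x) < s x" using nonincreasing[OF x] by simp
  let ?B = "{y \<in> C. s y \<le> s (f x)}"
  have "f ` ?B \<subseteq> ?B"
  proof
    fix z assume "z \<in> f ` ?B"
    then obtain y where y: "y \<in> C" "s y \<le> s (f x)" "z = f y" by blast
    then show "z \<in> ?B" using closed nonincreasing[OF y(1)] by auto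
  qed
  moreover have "inj_on f ?B"
    using inj by (rule inj_on_subset) blast
  ultimately have "f ` ?B = ?B"
    using fin by (intro endo_inj_surj)
  moreover have "f x \<in> ?B" using x closed by auto
  ultimately have "f x \<in> f ` ?B" by (rule ssubst)
  then have "x \<in> ?B"
    using inj_on_image_mem_iff[OF inj x, of ?B] by blast
  with less show False by simp
qed

lemma red_reduced: "reduced w \<Longrightarrow> red w = w"
  by (induction w rule: reduced.induct) auto

lemma reduced_Cons_tl: "reduced (x # xs) \<Longrightarrow> reduced xs"
  by (cases xs) auto

lemma reduced_red: "reduced (red w)"
  by (induction w) (auto split: list.split dest: reduced_Cons_tl)

lemma set_red_subset: "set (red w) \<subseteq> set w"
  by (induction w) (auto split: list.split)

lemma length_red_le: "length (red w) \<le> length w"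
  by (induction w) (auto split: list.split)

lemma letter_neq_inv_letter: "x \<noteq> inv_letter x"
  by (simp add: inv_letter_def prod_eq_iff)

lemma reduced_Cons_replicate_append: "reduced (x # w) \<Longrightarrow> reduced (x # replicate k x @ w)"
  using letter_neq_inv_letter[of x] by (induction k) auto

lemma red_Cons_eq_Nil:
  assumes "reduced w" "red (x # w) = []"
  shows "w = [inv_letter x]"
proof -
  have "(case w of [] \<Rightarrow> [x] | y # ys \<Rightarrow> (if y = inv_letter x then ys else x # y # ys)) = []"
    using assms by (simp add: red_reduced)
  then show ?thesis by (cases w) (auto split: if_splits)
qed

lemma Nil_in_Fn_words: "[] \<in> Fn_words n"
  by (simp add: Fn_words_def)

lemma singleton_in_Fn_words: "fst x < n \<Longrightarrow> [x] \<in> Fn_words n"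
  by (simp add: Fn_words_def)

lemma red_append_in_Fn_words:
  "u \<in> Fn_words n \<Longrightarrow> v \<in> Fn_words n \<Longrightarrow> red (u @ v) \<in> Fn_words n"
  using reduced_red set_red_subset unfolding Fn_words_def by fastforce

lemma finite_Fn_words_length_le: "finite {u \<in> Fn_words n. length u \<le> L}"
proof (rule finite_subset)
  show "{u \<in> Fn_words n. length u \<le> L}
          \<subseteq> {xs. set xs \<subseteq> {0..<n} \<times> UNIV \<and> length xs \<le> L}"
    unfolding Fn_words_def by force
qed (simp add: finite_lists_length_le)

locale free_group_automorphism =
  fixes n :: nat and \<phi> :: "word \<Rightarrow> word"
  assumes iso: "\<phi> \<in> iso (free_group n) (free_group n)"
begin

lemma hom_red_append:
  "u \<in> Fn_words n \<Longrightarrow> v \<in> Fn_words n \<Longrightarrow> \<phi> (red (u @ v)) = red (\<phi> u @ \<phi> v)"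
  using iso by (simp add: iso_def hom_def free_group_def)

lemma bij_betw_Fn_words: "bij_betw \<phi> (Fn_words n) (Fn_words n)"
  using iso by (simp add: iso_def free_group_def)

lemma image_in_Fn_words: "u \<in> Fn_words n \<Longrightarrow> \<phi> u \<in> Fn_words n"
  using bij_betw_Fn_words by (rule bij_betw_apply)

lemma image_Nil: "\<phi> [] = []"
proof -
  \<comment> \<open>free_group n is not shown to be a group here, so hom_one is unavailable; use surjectivity.\<close>
  obtain u where u: "u \<in> Fn_words n" "\<phi> u = []"
    using bij_betw_Fn_words Nil_in_Fn_words by (metis bij_betw_iff_bijections)
  have "[] = red (\<phi> u @ \<phi> [])"
    using hom_red_append[OF u(1) Nil_in_Fn_words] u red_reduced Fn_words_def by auto
  also have "\<dots> = \<phi> []"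
    using u image_in_Fn_words[OF Nil_in_Fn_words] red_reduced by (simp add: Fn_words_def)
  finally show ?thesis by simp
qed

lemma image_length_le_eq_if_almost_length_increasing:
  assumes "almost_length_increasing n \<phi>"
  obtains M where "\<And>L. M \<le> L \<Longrightarrow>
    \<phi> ` {u \<in> Fn_words n. length u \<le> L} = {u \<in> Fn_words n. length u \<le> L}"
proof
  let ?E = "{u \<in> Fn_words n. length (\<phi> u) < length u}"
  have "finite ?E" using assms by (simp add: almost_length_increasing_def)
  then have "u \<in> ?E \<Longrightarrow> length u \<le> Max (length ` ?E)" for u by simp
  then show "\<phi> ` {u \<in> Fn_words n. length u \<le> L} = {u \<in> Fn_words n. length u \<le> L}"
    if "Max (length ` ?E) \<le> L" for L
    using that by (intro bij_betw_image_sublevel_eq bij_betw_Fn_words finite_Fn_words_length_le) force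
qed

lemma length_generator_image_if_almost_length_increasing:
  assumes ali: "almost_length_increasing n \<phi>" and a: "a < n"
  shows "length (\<phi> [(a, False)]) = 1"
proof -
  let ?g = "[(a, False)]" and ?B = "\<lambda>L. {u \<in> Fn_words n. length u \<le> L}"
  obtain M where ball: "\<And>L. M \<le> L \<Longrightarrow> \<phi> ` ?B L = ?B L"
    using image_length_le_eq_if_almost_length_increasing[OF ali] by blast
  have ball_M: "\<phi> ` ?B M = ?B M" and ball_Suc_M: "\<phi> ` ?B (Suc M) = ?B (Suc M)"
    by (simp_all add: ball)
  have g: "?g \<in> Fn_words n" using a by (simp add: singleton_in_Fn_words)
  have "\<phi> ?g \<noteq> []"
  proof
    assume "\<phi> ?g = []"
    then have "\<phi> ?g = \<phi> []" by (simp add: image_Nil)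
    then have "?g = []"
      using inj_onD[OF bij_betw_imp_inj_on[OF bij_betw_Fn_words]] g Nil_in_Fn_words by blast
    then show False by simp
  qed
  then obtain x w where w: "\<phi> ?g = x # w" by (cases "\<phi> ?g") auto
  have x_w: "reduced (x # w)" and x: "fst x < n"
    using image_in_Fn_words[OF g] by (auto simp: w Fn_words_def)
  have xs_w: "reduced (replicate M x @ x # w)"
    using reduced_Cons_replicate_append[OF x_w, of M] by (simp add: replicate_app_Cons_same)
  have "reduced (replicate M x)"
    using reduced_Cons_tl[OF reduced_Cons_replicate_append[of x "[]" M]] by simp
  then have "replicate M x \<in> ?B M" using x by (simp add: Fn_words_def)
  then have "replicate M x \<in> \<phi> ` ?B M" using ball_M by simp
  then obtain u where u_eq: "replicate M x = \<phi> u" and u_B: "u \<in> ?B M"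
    by (rule imageE)
  from u_B have u: "u \<in> Fn_words n" "length u \<le> M" by simp_all
  let ?u' = "red (u @ ?g)"
  have "?u' \<in> ?B (Suc M)"
    using red_append_in_Fn_words[OF u(1) g] length_red_le[of "u @ ?g"] u(2) by simp
  then have "\<phi> ?u' \<in> \<phi> ` ?B (Suc M)" by (rule imageI)
  then have "\<phi> ?u' \<in> ?B (Suc M)" using ball_Suc_M by simp
  moreover have "\<phi> ?u' = red (replicate M x @ x # w)"
    using hom_red_append[OF u(1) g] u_eq w by simp
  ultimately have "length (replicate M x @ x # w) \<le> Suc M"
    using red_reduced[OF xs_w] by simp
  then show ?thesis using w by simp
qed

lemma length_inverse_generator_image:
  assumes "length (\<phi> [(a, False)]) = 1" and a: "a < n"
  shows "length (\<phi> [(a, True)]) = 1"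
proof -
  obtain y where y: "\<phi> [(a, False)] = [y]"
    using assms(1) by (cases "\<phi> [(a, False)]") auto
  have g: "[(a, b)] \<in> Fn_words n" for b using a by (simp add: singleton_in_Fn_words)
  have "red (y # \<phi> [(a, True)]) = \<phi> (red ([(a, False)] @ [(a, True)]))"
    using hom_red_append[OF g g] y by simp
  also have "\<dots> = []" by (simp add: inv_letter_def image_Nil)
  finally have "\<phi> [(a, True)] = [inv_letter y]"
    using image_in_Fn_words[OF g] by (intro red_Cons_eq_Nil) (simp_all add: Fn_words_def)
  then show ?thesis by simp
qed

lemma length_image_le_if_letter_images_short:
  assumes letters: "\<And>x. fst x < n \<Longrightarrow> length (\<phi> [x]) \<le> 1"
  shows "u \<in> Fn_words n \<Longrightarrow> length (\<phi> u) \<le> length u"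
proof (induction u)
  case Nil
  then show ?case by (simp add: image_Nil)
next
  case (Cons x u)
  have x: "[x] \<in> Fn_words n" and u: "u \<in> Fn_words n"
    using Cons.prems reduced_Cons_tl[of x u] by (simp_all add: Fn_words_def)
  have "\<phi> (x # u) = \<phi> (red ([x] @ u))"
    using Cons.prems by (simp add: red_reduced Fn_words_def del: red.simps)
  also have "\<dots> = red (\<phi> [x] @ \<phi> u)"
    by (rule hom_red_append[OF x u])
  also have "length \<dots> \<le> length (\<phi> [x]) + length (\<phi> u)"
    using length_red_le by (metis length_append)
  finally show ?case
    using letters[of x] Cons.IH[OF u] x by (simp add: Fn_words_def)
qed

lemma length_image_eq_if_generators_to_letters:
  assumes gens: "\<forall>a<n. length (\<phi> [(a, False)]) = 1" and u: "u \<in> Fn_words n"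
  shows "length (\<phi> u) = length u"
proof -
  have "length (\<phi> [(a, b)]) \<le> 1" if "a < n" for a b
    using that gens length_inverse_generator_image by (cases b) auto
  then have "length (\<phi> [x]) \<le> 1" if "fst x < n" for x
    using that by (cases x) auto
  then have "\<And>u. u \<in> Fn_words n \<Longrightarrow> length (\<phi> u) \<le> length u"
    by (rule length_image_le_if_letter_images_short)
  with bij_betw_Fn_words u show ?thesis
    by (intro inj_on_nonincreasing_imp_size_eq[where s = length])
       (auto simp: bij_betw_def finite_Fn_words_length_le)
qed

end

theorem mainTheorem8:
  fixes n :: nat and \<phi> :: "word \<Rightarrow> word"
  assumes "\<phi> \<in> iso (free_group n) (free_group n)"
  shows "almost_length_increasing n \<phi> \<longleftrightarrow> (\<forall>a<n. length (\<phi> [(a, False)]) = 1)"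
proof -
  interpret free_group_automorphism n \<phi> using assms by unfold_locales
  show ?thesis
  proof
    assume "almost_length_increasing n \<phi>"
    then show "\<forall>a<n. length (\<phi> [(a, False)]) = 1"
      using length_generator_image_if_almost_length_increasing by blast
  next
    assume "\<forall>a<n. length (\<phi> [(a, False)]) = 1"
    then have "{u \<in> Fn_words n. length (\<phi> u) < length u} = {}"
      using length_image_eq_if_generators_to_letters by fastforce
    then show "almost_length_increasing n \<phi>"
      unfolding almost_length_increasing_def by (metis finite.emptyI)
  qed
qed

end
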